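(* Let $D=\mathrm{diag}(d_1,\dots,d_n)\in\mathbb{D}^n_+$, $W\in\mathbb{R}^{n\times n}$, $u\in\mathbb{R}^n$, $A:=W-D$, and $\mathcal X=\{x\in\mathbb{R}^n: Dx\in[0,1]^n\}$. For $\tau>0$ define $f_\tau:\mathcal X\to\mathbb{R}^n$ by $f_\tau(x)=\frac1\tau\left(-Dx+[Dx+\tau(Ax+u)]_0^1\right)$. Then: (i) the set of equilibria $\{x\in\mathcal X: f_\tau(x)=0\}$ does not depend on $\tau>0$; (ii) if $A$ is Lyapunov diagonally stable, then this common equilibrium set consists of exactly one point.
   Context: $\mathbb{D}^n_+$ is the set of $n\times n$ diagonal matrices with positive diagonal entries; $[z]_0^1=\max(0,\min(z,1))$ elementwise. A matrix $M$ is Lyapunov diagonally stable if $M^\top\Lambda+\Lambda M\prec0$ for some $\Lambda\in\mathbb{D}^n_+$. *)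

theory Defs
  imports "HOL-Analysis.Analysis"
begin

definition pos_diag :: "real^'n^'n \<Rightarrow> bool" where
  "pos_diag D \<longleftrightarrow> (\<forall>i j. i \<noteq> j \<longrightarrow> D $ i $ j = 0) \<and> (\<forall>i. D $ i $ i > 0)"

definition neg_def :: "real^'n^'n \<Rightarrow> bool" where
  "neg_def M \<longleftrightarrow> (\<forall>x. x \<noteq> 0 \<longrightarrow> x \<bullet> (M *v x) < 0)"

definition lyap_diag_stable :: "real^'n^'n \<Rightarrow> bool" where
  "lyap_diag_stable M \<longleftrightarrow>
     (\<exists>\<Lambda>. pos_diag \<Lambda> \<and> neg_def (transpose M ** \<Lambda> + \<Lambda> ** M))"

definition clip01 :: "real^'n \<Rightarrow> real^'n" where
  "clip01 z = (\<chi> i. max 0 (min (z $ i) 1))"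

definition dom_X :: "real^'n^'n \<Rightarrow> (real^'n) set" where
  "dom_X D = {x. \<forall>i. 0 \<le> (D *v x) $ i \<and> (D *v x) $ i \<le> 1}"

definition f_tau :: "real^'n^'n \<Rightarrow> real^'n^'n \<Rightarrow> real^'n \<Rightarrow> real \<Rightarrow> real^'n \<Rightarrow> real^'n" where
  "f_tau D W u \<tau> x =
     (1 / \<tau>) *\<^sub>R (- (D *v x) + clip01 (D *v x + \<tau> *\<^sub>R ((W - D) *v x + u)))"

definition equilibria :: "real^'n^'n \<Rightarrow> real^'n^'n \<Rightarrow> real^'n \<Rightarrow> real \<Rightarrow> (real^'n) set" where
  "equilibria D W u \<tau> = {x \<in> dom_X D. f_tau D W u \<tau> x = 0}"

end

theory Submission
  imports Defs
begin

(* Componentwise, y = (D x)_i is a fixed point of y \<mapsto> [y + \<tau> g]_0^1, where g = (A x + u)_i,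
   exactly when y maximises z \<mapsto> g z over [0,1]. This variational inequality does not involve \<tau>,
   which gives (i). Adding the inequalities of two solutions x, x' gives e_i (A e)_i \<ge> 0 for
   e = x - x' and all i; for a diagonal Lyapunov weight \<Lambda> this makes
   e\<^sup>T (A\<^sup>T \<Lambda> + \<Lambda> A) e = 2 \<Sum>_i \<Lambda>_ii e_i (A e)_i nonnegative, so e = 0.
   Existence is Brouwer's theorem for x \<mapsto> D\<inverse> [D x + \<tau> (A x + u)]_0^1 on the box X. *)

lemma pos_diag_mult_vec_nth:
  assumes "pos_diag D"
  shows "(D *v x) $ i = D $ i $ i * x $ i"
proof -
  have "(D *v x) $ i = (\<Sum>j\<in>UNIV. D $ i $ j * x $ j)"
    by (simp add: matrix_vector_mult_def)
  also have "\<dots> = (\<Sum>j\<in>UNIV. if j = i then D $ i $ i * x $ i else 0)"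
    using assms unfolding pos_diag_def by (intro sum.cong) auto
  finally show ?thesis by simp
qed

lemma pos_diag_quadratic_form:
  assumes "pos_diag \<Lambda>"
  shows "e \<bullet> ((transpose M ** \<Lambda> + \<Lambda> ** M) *v e) = 2 * (\<Sum>i\<in>UNIV. \<Lambda> $ i $ i * (e $ i * (M *v e) $ i))"
proof -
  let ?S = "\<Sum>i\<in>UNIV. \<Lambda> $ i $ i * (e $ i * (M *v e) $ i)"
  have "e \<bullet> ((transpose M ** \<Lambda>) *v e) = (M *v e) \<bullet> (\<Lambda> *v e)"
    by (metis matrix_vector_mul_assoc dot_lmul_matrix vector_transpose_matrix inner_commute)
  also have "\<dots> = ?S"
    unfolding inner_vec_def by (intro sum.cong) (auto simp: pos_diag_mult_vec_nth[OF assms])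
  finally have left: "e \<bullet> ((transpose M ** \<Lambda>) *v e) = ?S" .
  have "e \<bullet> ((\<Lambda> ** M) *v e) = e \<bullet> (\<Lambda> *v (M *v e))"
    by (simp add: matrix_vector_mul_assoc)
  also have "\<dots> = ?S"
    unfolding inner_vec_def by (intro sum.cong) (auto simp: pos_diag_mult_vec_nth[OF assms])
  finally have right: "e \<bullet> ((\<Lambda> ** M) *v e) = ?S" .
  show ?thesis
    using left right by (simp add: matrix_vector_mult_add_rdistrib inner_add_right)
qed

lemma lyap_diag_stable_nonneg_products_imp_zero:
  assumes "lyap_diag_stable M" and nonneg: "\<And>i. 0 \<le> e $ i * (M *v e) $ i"
  shows "e = 0"
proof (rule ccontr)
  assume "e \<noteq> 0"
  obtain \<Lambda> where \<Lambda>: "pos_diag \<Lambda>" and neg: "neg_def (transpose M ** \<Lambda> + \<Lambda> ** M)"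
    using assms(1) unfolding lyap_diag_stable_def by blast
  have "e \<bullet> ((transpose M ** \<Lambda> + \<Lambda> ** M) *v e) < 0"
    using neg \<open>e \<noteq> 0\<close> unfolding neg_def_def by blast
  moreover have "0 \<le> (\<Sum>i\<in>UNIV. \<Lambda> $ i $ i * (e $ i * (M *v e) $ i))"
    using \<Lambda> nonneg unfolding pos_diag_def by (intro sum_nonneg mult_nonneg_nonneg[OF less_imp_le nonneg]) auto
  ultimately show False
    unfolding pos_diag_quadratic_form[OF \<Lambda>] by simp
qed

definition unit_interval_vi :: "real \<Rightarrow> real \<Rightarrow> bool" where
  "unit_interval_vi g y \<longleftrightarrow> y \<in> {0..1} \<and> (\<forall>z\<in>{0..1}. g * (z - y) \<le> 0)"

lemma unit_interval_vi_iff_endpoints: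
  "unit_interval_vi g y \<longleftrightarrow> y \<in> {0..1} \<and> g * (0 - y) \<le> 0 \<and> g * (1 - y) \<le> 0"
proof
  assume y: "y \<in> {0..1} \<and> g * (0 - y) \<le> 0 \<and> g * (1 - y) \<le> 0"
  have "g * (z - y) \<le> 0" if "z \<in> {0..1}" for z
  proof -
    have "g * (z - y) = (1 - z) * (g * (0 - y)) + z * (g * (1 - y))"
      by (simp add: algebra_simps)
    also have "\<dots> \<le> 0"
    proof -
      have "(1 - z) * (g * (0 - y)) \<le> 0" "z * (g * (1 - y)) \<le> 0"
        using y that by (auto intro: mult_nonneg_nonpos)
      then show ?thesis by linarith
    qed
    finally show ?thesis .
  qed
  with y show "unit_interval_vi g y"
    unfolding unit_interval_vi_def by blast
next
  assume "unit_interval_vi g y"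
  then show "y \<in> {0..1} \<and> g * (0 - y) \<le> 0 \<and> g * (1 - y) \<le> 0"
    unfolding unit_interval_vi_def by (metis atLeastAtMost_iff order_refl zero_le_one)
qed

lemma clip_fixed_iff_unit_interval_vi:
  fixes g y t :: real
  assumes "t > 0"
  shows "max 0 (min (y + t * g) 1) = y \<longleftrightarrow> unit_interval_vi g y"
proof -
  consider "g < 0" | "g = 0" | "g > 0" by linarith
  then show ?thesis
  proof cases
    case 1
    then have "t * g < 0" "g * (0 - y) \<le> 0 \<longleftrightarrow> y \<le> 0" "g * (1 - y) \<le> 0 \<longleftrightarrow> y \<le> 1"
      using assms by (auto simp: mult_pos_neg mult_le_0_iff zero_le_mult_iff)
    then show ?thesis unfolding unit_interval_vi_iff_endpoints by (smt (verit) atLeastAtMost_iff)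
  next
    case 3
    then have "t * g > 0" "g * (0 - y) \<le> 0 \<longleftrightarrow> 0 \<le> y" "g * (1 - y) \<le> 0 \<longleftrightarrow> 1 \<le> y"
      using assms by (auto simp: mult_le_0_iff zero_le_mult_iff)
    then show ?thesis unfolding unit_interval_vi_iff_endpoints by (smt (verit) atLeastAtMost_iff)
  qed (unfold unit_interval_vi_iff_endpoints, auto simp: max_def min_def)
qed

lemma unit_interval_vi_monotone:
  assumes "unit_interval_vi g y" and "unit_interval_vi g' y'"
  shows "0 \<le> (g - g') * (y - y')"
proof -
  have "g * (y' - y) \<le> 0" and "g' * (y - y') \<le> 0"
    using assms unfolding unit_interval_vi_def by auto
  then show ?thesis by (simp add: algebra_simps)
qed

lemma equilibria_iff_unit_interval_vi:
  assumes "\<tau> > 0"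
  shows "x \<in> equilibria D W u \<tau> \<longleftrightarrow> (\<forall>i. unit_interval_vi (((W - D) *v x + u) $ i) ((D *v x) $ i))"
proof -
  have "f_tau D W u \<tau> x = 0 \<longleftrightarrow> clip01 (D *v x + \<tau> *\<^sub>R ((W - D) *v x + u)) = D *v x"
    using assms unfolding f_tau_def by (auto simp: algebra_simps)
  also have "\<dots> \<longleftrightarrow> (\<forall>i. unit_interval_vi (((W - D) *v x + u) $ i) ((D *v x) $ i))"
    unfolding clip01_def vec_eq_iff by (simp add: clip_fixed_iff_unit_interval_vi[OF assms])
  finally show ?thesis
    unfolding equilibria_def dom_X_def unit_interval_vi_def by auto
qed

lemma equilibria_unique:
  assumes D: "pos_diag D" and stable: "lyap_diag_stable (W - D)"
    and x: "x \<in> equilibria D W u \<tau>" and x': "x' \<in> equilibria D W u \<tau>" and "\<tau> > 0"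
  shows "x = x'"
proof -
  have "0 \<le> (x - x') $ i * ((W - D) *v (x - x')) $ i" for i
  proof -
    have "0 \<le> (((W - D) *v x + u) $ i - ((W - D) *v x' + u) $ i) * ((D *v x) $ i - (D *v x') $ i)"
      using x x' \<open>\<tau> > 0\<close> by (intro unit_interval_vi_monotone) (auto simp: equilibria_iff_unit_interval_vi)
    then have "0 \<le> D $ i $ i * ((x - x') $ i * ((W - D) *v (x - x')) $ i)"
      by (simp add: pos_diag_mult_vec_nth[OF D] matrix_vector_mult_diff_distrib algebra_simps)
    moreover have "D $ i $ i > 0" using D unfolding pos_diag_def by blast
    ultimately show ?thesis by (simp add: zero_le_mult_iff)
  qed
  then have "x - x' = 0" by (rule lyap_diag_stable_nonneg_products_imp_zero[OF stable])
  then show ?thesis by simp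
qed

lemma dom_X_eq_cbox:
  assumes "pos_diag D"
  shows "dom_X D = cbox 0 (\<chi> i. 1 / D $ i $ i)"
proof -
  have "0 \<le> D $ i $ i * x $ i \<and> D $ i $ i * x $ i \<le> 1 \<longleftrightarrow> 0 \<le> x $ i \<and> x $ i \<le> 1 / D $ i $ i"
    for x and i
  proof -
    have "D $ i $ i > 0" using assms unfolding pos_diag_def by blast
    then show ?thesis by (auto simp: zero_le_mult_iff pos_le_divide_eq mult.commute)
  qed
  then show ?thesis
    unfolding set_eq_iff dom_X_def mem_box_cart pos_diag_mult_vec_nth[OF assms] by auto
qed

lemma equilibria_nonempty:
  assumes D: "pos_diag D" and "\<tau> > 0"
  shows "equilibria D W u \<tau> \<noteq> {}"
proof -
  define h where "h x = D *v x + \<tau> *\<^sub>R ((W - D) *v x + u)" for x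
  define g where "g x = (\<chi> i. clip01 (h x) $ i / D $ i $ i)" for x
  define X where "X = cbox 0 (\<chi> i. 1 / D $ i $ i)"
  have D_pos: "D $ i $ i > 0" for i
    using D unfolding pos_diag_def by blast
  have "continuous_on X h"
    unfolding h_def by (intro continuous_intros linear_continuous_on matrix_vector_mul_linear)
  then have "continuous_on X g"
    unfolding g_def clip01_def by (intro continuous_intros) (auto simp: D_pos less_imp_neq[symmetric])
  moreover have "g \<in> X \<rightarrow> X"
  proof
    fix x
    have "0 \<le> g x $ i \<and> g x $ i \<le> 1 / D $ i $ i" for i
      using D_pos[of i] unfolding g_def clip01_def by (auto simp: divide_right_mono)
    then show "g x \<in> X" unfolding X_def mem_box_cart by simp
  qed
  moreover have "0 \<in> X"
    using D_pos unfolding X_def mem_box_cart by (simp add: less_imp_le)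
  ultimately obtain x where "x \<in> X" and "g x = x"
    using brouwer[of X g] unfolding X_def by (auto simp: compact_cbox convex_box)
  have "D *v x = clip01 (h x)"
  proof -
    have "D $ i $ i * x $ i = clip01 (h x) $ i" for i
    proof -
      have "clip01 (h x) $ i / D $ i $ i = x $ i"
        using \<open>g x = x\<close> unfolding g_def vec_eq_iff by simp
      then show ?thesis using D_pos[of i] by (simp add: field_simps)
    qed
    then show ?thesis
      unfolding vec_eq_iff pos_diag_mult_vec_nth[OF D] by simp
  qed
  then have "f_tau D W u \<tau> x = 0"
    unfolding f_tau_def h_def by simp
  with \<open>x \<in> X\<close> show ?thesis
    unfolding equilibria_def X_def dom_X_eq_cbox[OF D, symmetric] by blast
qed

theorem proposition2:
  fixes D W :: "real^'n^'n" and u :: "real^'n"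
  assumes "pos_diag D"
  shows "(\<forall>\<tau>1 \<tau>2. \<tau>1 > 0 \<longrightarrow> \<tau>2 > 0 \<longrightarrow> equilibria D W u \<tau>1 = equilibria D W u \<tau>2)
       \<and> (lyap_diag_stable (W - D) \<longrightarrow> (\<forall>\<tau>>0. \<exists>!x. x \<in> equilibria D W u \<tau>))"
proof (intro conjI allI impI)
  fix \<tau>1 \<tau>2 :: real
  assume "\<tau>1 > 0" "\<tau>2 > 0"
  then show "equilibria D W u \<tau>1 = equilibria D W u \<tau>2"
    by (auto simp: equilibria_iff_unit_interval_vi)
next
  fix \<tau> :: real
  assume "lyap_diag_stable (W - D)" "\<tau> > 0"
  then show "\<exists>!x. x \<in> equilibria D W u \<tau>"
    using equilibria_nonempty[OF assms] equilibria_unique[OF assms] by blast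
qed

end
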